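(* Let $g$ be a function on $[-\pi,\pi]$ of the form $$g(\lambda)=h(\lambda)\,|\lambda-\lambda_1|^{\alpha(1)}\cdots|\lambda-\lambda_r|^{\alpha(r)},$$ where $r\in\mathbb{N}$, $\lambda_1,\dots,\lambda_r\in[-\pi,\pi]$, $\alpha(1),\dots,\alpha(r)\ge0$, and $h$ is a nonnegative measurable function, integrable over $[-\pi,\pi]$, continuous at $\lambda=0$, with a positive lower bound. Then for every $\epsilon>0$ there exists a trigonometric polynomial $t(\lambda)$ such that $0\le t(\lambda)\le g(\lambda)$ for all $\lambda\in[-\pi,\pi]$ and $t(0)\ge g(0)-\epsilon$. *)

theory Defs
  imports "HOL-Analysis.Analysis"
begin

text \<open>Real power with the convention x^0 = 1 (Isabelle's powr has 0 powr 0 = 0).\<close>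
definition rpow0 :: "real \<Rightarrow> real \<Rightarrow> real" where
  "rpow0 x a = (if a = 0 then 1 else x powr a)"

definition trig_poly :: "(real \<Rightarrow> real) \<Rightarrow> bool" where
  "trig_poly t \<longleftrightarrow> (\<exists>n::nat. \<exists>a b :: nat \<Rightarrow> real.
     \<forall>x. t x = (\<Sum>k\<le>n. a k * cos (real k * x) + b k * sin (real k * x)))"

end

(*
  With A = g 0 - eps > 0 (otherwise t = 0 works), the minorant is
  t x = A * ((1 + cos x) / 2)^N * Q x, where Q is a nonnegative trigonometric polynomial
  with Q 0 = 1 and Q = O(g) on [-pi, pi]. Such a Q is the product over the zeros of g of
  ((1 - cos (x - lam j)) / (1 - cos (lam j)))^k with 2k >= alpha j: since 1 - cos y <= y^2,
  each factor is O(|x - lam j|^(alpha j)), and lam j <> 0 because g 0 > 0.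
  Continuity of g at 0 gives A * Q <= g near 0; away from 0 the factor
  ((1 + cos x) / 2)^N is uniformly small for large N and pushes A * Q below g.
*)

theory Submission
  imports Defs
begin

lemma trig_sum_extend:
  assumes "n \<le> m"
  shows "(\<Sum>k\<le>n. a k * cos (real k * x) + b k * sin (real k * x)) =
    (\<Sum>k\<le>m. (if k \<le> n then a k else 0) * cos (real k * x) + (if k \<le> n then b k else 0) * sin (real k * x))"
  using assms by (intro sum.mono_neutral_cong_left) auto

lemma trig_poly_harmonic: "trig_poly (\<lambda>x. a * cos (real m * x) + b * sin (real m * x))"
proof -
  have "(\<Sum>k\<le>m. (if k = m then a else 0) * cos (real k * x) + (if k = m then b else 0) * sin (real k * x)) =
    (\<Sum>k\<le>m. if k = m then a * cos (real m * x) + b * sin (real m * x) else 0)" for x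
    by (rule sum.cong) auto
  then have "a * cos (real m * x) + b * sin (real m * x) =
    (\<Sum>k\<le>m. (if k = m then a else 0) * cos (real k * x) + (if k = m then b else 0) * sin (real k * x))" for x
    by simp
  then show ?thesis
    unfolding trig_poly_def
    by (intro exI[of _ m] exI[of _ "\<lambda>k. if k = m then a else 0"] exI[of _ "\<lambda>k. if k = m then b else 0"]) simp
qed

lemma trig_poly_harmonic_diff:
  "trig_poly (\<lambda>x. a * cos ((real i - real j) * x) + b * sin ((real i - real j) * x))"
proof (cases "j \<le> i")
  case True
  then show ?thesis
    using trig_poly_harmonic[of a "i - j" b] by simp
next
  case False
  then have "(real i - real j) * x = - (real (j - i) * x)" for x
    by (simp add: algebra_simps)
  then show ?thesis
    using trig_poly_harmonic[of a "j - i" "- b"] by simp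
qed

lemma trig_poly_const: "trig_poly (\<lambda>x. c)"
  using trig_poly_harmonic[of c 0 0] by simp

lemma trig_poly_add:
  assumes "trig_poly f" "trig_poly g"
  shows "trig_poly (\<lambda>x. f x + g x)"
proof -
  obtain n a b where f: "\<And>x. f x = (\<Sum>k\<le>n. a k * cos (real k * x) + b k * sin (real k * x))"
    using assms(1) unfolding trig_poly_def by blast
  obtain n' a' b' where g: "\<And>x. g x = (\<Sum>k\<le>n'. a' k * cos (real k * x) + b' k * sin (real k * x))"
    using assms(2) unfolding trig_poly_def by blast
  define m where "m = max n n'"
  define c where "c k = (if k \<le> n then a k else 0) + (if k \<le> n' then a' k else 0)" for k
  define d where "d k = (if k \<le> n then b k else 0) + (if k \<le> n' then b' k else 0)" for k
  have "n \<le> m" "n' \<le> m"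
    by (simp_all add: m_def)
  then have "f x + g x = (\<Sum>k\<le>m. c k * cos (real k * x) + d k * sin (real k * x))" for x
    unfolding f g trig_sum_extend[OF \<open>n \<le> m\<close>] trig_sum_extend[OF \<open>n' \<le> m\<close>] c_def d_def
    by (simp add: sum.distrib[symmetric] algebra_simps)
  then show ?thesis
    unfolding trig_poly_def by blast
qed

lemma trig_poly_scale:
  assumes "trig_poly f"
  shows "trig_poly (\<lambda>x. c * f x)"
proof -
  obtain n a b where f: "\<And>x. f x = (\<Sum>k\<le>n. a k * cos (real k * x) + b k * sin (real k * x))"
    using assms unfolding trig_poly_def by blast
  have "c * f x = (\<Sum>k\<le>n. (c * a k) * cos (real k * x) + (c * b k) * sin (real k * x))" for x
    unfolding f by (simp add: sum_distrib_left algebra_simps)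
  then show ?thesis
    unfolding trig_poly_def by (intro exI[of _ n] exI[of _ "\<lambda>k. c * a k"] exI[of _ "\<lambda>k. c * b k"]) simp
qed

lemma trig_poly_sum:
  assumes "finite I" "\<And>i. i \<in> I \<Longrightarrow> trig_poly (f i)"
  shows "trig_poly (\<lambda>x. \<Sum>i\<in>I. f i x)"
  using assms by (induction I rule: finite_induct) (auto intro: trig_poly_const trig_poly_add)

lemma trig_poly_harmonic_mult:
  "trig_poly (\<lambda>x. (a * cos (real i * x) + b * sin (real i * x)) * (c * cos (real j * x) + d * sin (real j * x)))"
proof -
  have "(a * cos (real i * x) + b * sin (real i * x)) * (c * cos (real j * x) + d * sin (real j * x)) =
      ((a * c - b * d) / 2 * cos (real (i + j) * x) + (a * d + b * c) / 2 * sin (real (i + j) * x)) +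
      ((a * c + b * d) / 2 * cos ((real i - real j) * x) + (b * c - a * d) / 2 * sin ((real i - real j) * x))" for x
    by (simp add: left_diff_distrib distrib_right cos_add sin_add cos_diff sin_diff field_simps)
  then show ?thesis
    using trig_poly_add[OF trig_poly_harmonic trig_poly_harmonic_diff] by presburger
qed

lemma trig_poly_mult:
  assumes "trig_poly f" "trig_poly g"
  shows "trig_poly (\<lambda>x. f x * g x)"
proof -
  obtain n a b where f: "\<And>x. f x = (\<Sum>k\<le>n. a k * cos (real k * x) + b k * sin (real k * x))"
    using assms(1) unfolding trig_poly_def by blast
  obtain n' a' b' where g: "\<And>x. g x = (\<Sum>k\<le>n'. a' k * cos (real k * x) + b' k * sin (real k * x))"
    using assms(2) unfolding trig_poly_def by blast
  show ?thesis
    unfolding f g sum_product by (intro trig_poly_sum trig_poly_harmonic_mult) auto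
qed

lemma trig_poly_power:
  assumes "trig_poly f"
  shows "trig_poly (\<lambda>x. f x ^ n)"
  by (induction n) (auto intro: trig_poly_mult[OF assms] trig_poly_const)

lemma trig_poly_continuous:
  assumes "trig_poly f"
  shows "isCont f x"
proof -
  obtain n a b where "f = (\<lambda>x. \<Sum>k\<le>n. a k * cos (real k * x) + b k * sin (real k * x))"
    using assms unfolding trig_poly_def by blast
  then show ?thesis
    by (simp only:) (intro continuous_intros)
qed

lemma trig_poly_cos_shift: "trig_poly (\<lambda>x. a * cos (x - l))"
proof -
  have "a * cos (x - l) = (a * cos l) * cos (real 1 * x) + (a * sin l) * sin (real 1 * x)" for x
    by (simp add: cos_diff algebra_simps)
  then show ?thesis
    using trig_poly_harmonic[of "a * cos l" 1 "a * sin l"] by presburger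
qed

lemma cos_lt_one:
  fixes x :: real
  assumes "x \<noteq> 0" "\<bar>x\<bar> \<le> pi"
  shows "cos x < 1"
  using cos_monotone_0_pi[of 0 "\<bar>x\<bar>"] assms by (simp add: abs_if split: if_splits)

lemma one_minus_cos_le_square:
  fixes y :: real
  shows "1 - cos y \<le> y\<^sup>2"
proof -
  have "1 - cos y = 2 * sin (y / 2) ^ 2"
    using cos_double_sin[of "y / 2"] by simp
  also have "\<dots> \<le> 2 * (y / 2) ^ 2"
    using abs_sin_x_le_abs_x[of "y / 2"] abs_le_square_iff by (metis mult_left_mono zero_le_numeral)
  also have "\<dots> \<le> y\<^sup>2"
    by (simp add: power_divide)
  finally show ?thesis .
qed

lemma abs_power_le_powr:
  fixes y b a :: real
  assumes "0 < a" "a \<le> real n" "\<bar>y\<bar> \<le> b"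
  shows "\<bar>y\<bar> ^ n \<le> b powr (real n - a) * \<bar>y\<bar> powr a"
proof (cases "y = 0")
  case True
  then show ?thesis
    using assms by (simp add: zero_power)
next
  case False
  have "\<bar>y\<bar> ^ n = \<bar>y\<bar> powr (real n - a) * \<bar>y\<bar> powr a"
    using False by (simp add: powr_realpow[symmetric] powr_add[symmetric])
  also have "\<dots> \<le> b powr (real n - a) * \<bar>y\<bar> powr a"
    using assms by (intro mult_right_mono powr_mono2) auto
  finally show ?thesis .
qed

lemma raised_cos_nonneg:
  fixes x :: real
  shows "0 \<le> (1 + cos x) / 2"
  using cos_ge_minus_one[of x] by (simp del: cos_ge_minus_one)

lemma raised_cos_le_one:
  fixes x :: real
  shows "(1 + cos x) / 2 \<le> 1"
  using cos_le_one[of x] by (simp del: cos_le_one)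

lemma raised_cos_power_small:
  fixes \<delta> \<eta> :: real
  assumes "0 < \<delta>" "\<delta> \<le> pi" "0 < \<eta>"
  obtains N where "\<And>x. \<delta> \<le> \<bar>x\<bar> \<Longrightarrow> \<bar>x\<bar> \<le> pi \<Longrightarrow> ((1 + cos x) / 2) ^ N \<le> \<eta>"
proof -
  define \<rho> where "\<rho> = (1 + cos \<delta>) / 2"
  have "0 \<le> \<rho>"
    unfolding \<rho>_def by (rule raised_cos_nonneg)
  have "\<rho> < 1"
    using cos_lt_one[of \<delta>] assms unfolding \<rho>_def by simp
  then obtain N where N: "\<rho> ^ N < \<eta>"
    using real_arch_pow_inv assms(3) by blast
  have "((1 + cos x) / 2) ^ N \<le> \<eta>" if "\<delta> \<le> \<bar>x\<bar>" "\<bar>x\<bar> \<le> pi" for x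
  proof -
    have "cos x \<le> cos \<delta>"
      using cos_monotone_0_pi_le[of \<delta> "\<bar>x\<bar>"] that assms by (simp add: abs_if split: if_splits)
    then have "((1 + cos x) / 2) ^ N \<le> \<rho> ^ N"
      unfolding \<rho>_def using raised_cos_nonneg[of x] by (intro power_mono) auto
    with N show ?thesis
      by simp
  qed
  then show ?thesis
    using that by blast
qed

lemma isCont_rpow0_abs_diff:
  assumes "0 \<le> a"
  shows "isCont (\<lambda>x. rpow0 \<bar>x - l\<bar> a) x"
proof (cases "a = 0")
  case True
  then show ?thesis
    by (simp add: rpow0_def)
next
  case False
  have "isCont (\<lambda>x. \<bar>x - l\<bar> powr a) x"
    using False assms by (intro continuous_intros) auto
  with False show ?thesis
    by (simp add: rpow0_def)
qed

lemma rpow0_nonneg: "0 \<le> rpow0 x a"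
  by (simp add: rpow0_def)

definition has_trig_bump :: "(real \<Rightarrow> real) \<Rightarrow> bool" where
  "has_trig_bump w \<longleftrightarrow>
     (\<exists>Q M. trig_poly Q \<and> (\<forall>x. 0 \<le> Q x) \<and> Q 0 = 1 \<and> (\<forall>x\<in>{-pi..pi}. Q x \<le> M * w x))"

lemma has_trig_bump_one: "has_trig_bump (\<lambda>x. 1)"
  unfolding has_trig_bump_def
  by (intro exI[of _ "\<lambda>x. 1"] exI[of _ 1]) (simp add: trig_poly_const)

lemma has_trig_bump_mult:
  assumes "has_trig_bump v" "has_trig_bump w"
  shows "has_trig_bump (\<lambda>x. v x * w x)"
proof -
  obtain P M where P: "trig_poly P" "\<forall>x. 0 \<le> P x" "P 0 = 1" "\<forall>x\<in>{-pi..pi}. P x \<le> M * v x"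
    using assms(1) unfolding has_trig_bump_def by blast
  obtain Q N where Q: "trig_poly Q" "\<forall>x. 0 \<le> Q x" "Q 0 = 1" "\<forall>x\<in>{-pi..pi}. Q x \<le> N * w x"
    using assms(2) unfolding has_trig_bump_def by blast
  have "P x * Q x \<le> (M * N) * (v x * w x)" if "x \<in> {-pi..pi}" for x
  proof -
    have "0 \<le> M * v x"
      using P(2,4) that by (meson order_trans)
    then have "P x * Q x \<le> (M * v x) * (N * w x)"
      using P Q that by (intro mult_mono) auto
    then show ?thesis
      by (simp add: algebra_simps)
  qed
  then show ?thesis
    unfolding has_trig_bump_def using P Q
    by (intro exI[of _ "\<lambda>x. P x * Q x"] exI[of _ "M * N"]) (auto intro: trig_poly_mult)
qed

lemma has_trig_bump_prod:
  assumes "finite J" "\<And>j. j \<in> J \<Longrightarrow> has_trig_bump (w j)"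
  shows "has_trig_bump (\<lambda>x. \<Prod>j\<in>J. w j x)"
  using assms by (induction J rule: finite_induct) (auto intro: has_trig_bump_one has_trig_bump_mult)

lemma has_trig_bump_mono:
  assumes "has_trig_bump v" "0 < c" "\<And>x. x \<in> {-pi..pi} \<Longrightarrow> 0 \<le> v x \<and> c * v x \<le> w x"
  shows "has_trig_bump w"
proof -
  obtain Q M where Q: "trig_poly Q" "\<forall>x. 0 \<le> Q x" "Q 0 = 1" "\<forall>x\<in>{-pi..pi}. Q x \<le> M * v x"
    using assms(1) unfolding has_trig_bump_def by blast
  have "Q x \<le> (max M 0 / c) * w x" if "x \<in> {-pi..pi}" for x
  proof -
    have "Q x \<le> max M 0 * v x"
      using Q(4) assms(3)[OF that] that by (meson max.cobounded1 mult_right_mono order_trans)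
    also have "\<dots> = (max M 0 / c) * (c * v x)"
      using assms(2) by simp
    also have "\<dots> \<le> (max M 0 / c) * w x"
      using assms(2,3) that by (intro mult_left_mono) auto
    finally show ?thesis .
  qed
  then show ?thesis
    unfolding has_trig_bump_def using Q by blast
qed

lemma has_trig_bump_rpow0_abs_diff:
  assumes "0 \<le> a" "l \<in> {-pi..pi}" "rpow0 \<bar>l\<bar> a \<noteq> 0"
  shows "has_trig_bump (\<lambda>x. rpow0 \<bar>x - l\<bar> a)"
proof (cases "a = 0")
  case True
  then show ?thesis
    using has_trig_bump_one by (simp add: rpow0_def)
next
  case False
  then have "0 < a" "l \<noteq> 0"
    using assms by (auto simp: rpow0_def)
  define D where "D = 1 - cos l"
  define k where "k = nat \<lceil>a\<rceil>"
  define Q where "Q x = ((1 - cos (x - l)) / D) ^ k" for x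
  have "0 < D"
    using cos_lt_one[of l] \<open>l \<noteq> 0\<close> assms(2) by (simp add: D_def abs_le_iff)
  have "a \<le> real (2 * k)"
    unfolding k_def using \<open>0 < a\<close> by linarith
  have "trig_poly Q"
  proof -
    have "Q = (\<lambda>x. (1 / D + (- 1 / D) * cos (x - l)) ^ k)"
      by (auto simp: Q_def diff_divide_distrib)
    then show ?thesis
      by (simp only:) (intro trig_poly_power trig_poly_add trig_poly_const trig_poly_cos_shift)
  qed
  moreover have "0 \<le> Q x" for x
    using \<open>0 < D\<close> by (simp add: Q_def)
  moreover have "Q 0 = 1"
    using \<open>0 < D\<close> by (simp add: Q_def D_def)
  moreover have "Q x \<le> ((2 * pi) powr (real (2 * k) - a) / D ^ k) * rpow0 \<bar>x - l\<bar> a"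
    if "x \<in> {-pi..pi}" for x
  proof -
    have "Q x = (1 - cos (x - l)) ^ k / D ^ k"
      by (simp add: Q_def power_divide)
    also have "\<dots> \<le> ((x - l)\<^sup>2) ^ k / D ^ k"
      using \<open>0 < D\<close> one_minus_cos_le_square[of "x - l"]
      by (intro divide_right_mono power_mono) auto
    also have "\<dots> = \<bar>x - l\<bar> ^ (2 * k) / D ^ k"
      by (simp add: power_mult)
    also have "\<dots> \<le> (2 * pi) powr (real (2 * k) - a) * \<bar>x - l\<bar> powr a / D ^ k"
      using \<open>0 < D\<close> \<open>0 < a\<close> \<open>a \<le> real (2 * k)\<close> that assms(2)
      by (intro divide_right_mono abs_power_le_powr) auto
    finally show ?thesis
      using False by (simp add: rpow0_def)
  qed
  ultimately show ?thesis
    unfolding has_trig_bump_def by blast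
qed

lemma trig_poly_minorant_peaked_at_0:
  assumes bump: "has_trig_bump G" and cont: "continuous (at 0 within {-pi..pi}) G"
    and "0 < A" "A < G 0"
  shows "\<exists>t. trig_poly t \<and> (\<forall>x\<in>{-pi..pi}. 0 \<le> t x \<and> t x \<le> G x) \<and> t 0 = A"
proof -
  obtain Q M where Q: "trig_poly Q" "\<forall>x. 0 \<le> Q x" "Q 0 = 1" "\<forall>x\<in>{-pi..pi}. Q x \<le> M * G x"
    using bump unfolding has_trig_bump_def by blast
  have "1 \<le> M * G 0"
    using Q(3) Q(4)[rule_format, of 0] by simp
  then have "0 < M"
    using \<open>0 < A\<close> \<open>A < G 0\<close> zero_less_mult_pos2[of M "G 0"] by simp
  have G_nonneg: "0 \<le> G x" if "x \<in> {-pi..pi}" for x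
    using Q(2,4) that \<open>0 < M\<close> by (meson order_trans zero_le_mult_iff not_le)
  have "continuous (at 0 within {-pi..pi}) (\<lambda>x. G x - A * Q x)"
    using cont continuous_at_imp_continuous_at_within[OF trig_poly_continuous[OF Q(1)]]
    by (intro continuous_diff continuous_mult continuous_const)
  then obtain d where "0 < d" and d: "\<And>x. x \<in> {-pi..pi} \<Longrightarrow> \<bar>x\<bar> < d \<Longrightarrow> A * Q x \<le> G x"
    using \<open>A < G 0\<close> Q(3) unfolding continuous_within_eps_delta
    by (drule_tac x = "G 0 - A" in spec) (force simp: dist_real_def)
  obtain N where N: "\<And>x. min d pi \<le> \<bar>x\<bar> \<Longrightarrow> \<bar>x\<bar> \<le> pi \<Longrightarrow> ((1 + cos x) / 2) ^ N \<le> 1 / (A * M)"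
    using raised_cos_power_small[of "min d pi" "1 / (A * M)"] \<open>0 < d\<close> \<open>0 < A\<close> \<open>0 < M\<close> by auto
  define t where "t x = A * ((1 + cos x) / 2) ^ N * Q x" for x
  have kernel: "0 \<le> ((1 + cos x) / 2) ^ N" "((1 + cos x) / 2) ^ N \<le> 1" for x :: real
    using raised_cos_nonneg[of x] raised_cos_le_one[of x] by (simp_all add: power_le_one)
  have "trig_poly t"
  proof -
    have "t = (\<lambda>x. A * (1 / 2 + (1 / 2) * cos (x - 0)) ^ N * Q x)"
      by (auto simp: t_def add_divide_distrib)
    then show ?thesis
      by (simp only:) (intro trig_poly_mult trig_poly_scale trig_poly_power trig_poly_add
          trig_poly_const trig_poly_cos_shift Q(1))
  qed
  moreover have "0 \<le> t x" for x
    using \<open>0 < A\<close> kernel Q(2) by (simp add: t_def)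
  moreover have "t x \<le> G x" if x: "x \<in> {-pi..pi}" for x
  proof (cases "\<bar>x\<bar> < d")
    case True
    have "t x \<le> A * 1 * Q x"
      unfolding t_def using \<open>0 < A\<close> kernel Q(2) by (intro mult_right_mono mult_left_mono) auto
    also have "\<dots> \<le> G x"
      using d[OF x True] by simp
    finally show ?thesis .
  next
    case False
    then have "min d pi \<le> \<bar>x\<bar>" "\<bar>x\<bar> \<le> pi"
      using x by auto
    then have "t x \<le> A * (1 / (A * M)) * (M * G x)"
      unfolding t_def using \<open>0 < A\<close> N Q(2,4) x G_nonneg \<open>0 < M\<close>
      by (intro mult_mono mult_left_mono) auto
    also have "\<dots> = G x"
      using \<open>0 < A\<close> \<open>0 < M\<close> by simp
    finally show ?thesis .
  qed
  moreover have "t 0 = A"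
    using Q(3) by (simp add: t_def)
  ultimately show ?thesis
    by blast
qed

theorem lemma5p5:
  fixes h :: "real \<Rightarrow> real" and r :: nat and lam alpha :: "nat \<Rightarrow> real"
    and g :: "real \<Rightarrow> real" and \<epsilon> :: real
  assumes lam_range: "\<forall>j\<in>{1..r}. lam j \<in> {-pi..pi}"
    and alpha_nonneg: "\<forall>j\<in>{1..r}. alpha j \<ge> 0"
    and h_nonneg: "\<forall>x\<in>{-pi..pi}. h x \<ge> 0"
    and h_meas: "h \<in> borel_measurable (restrict_space lborel {-pi..pi})"
    and h_int: "set_integrable lborel {-pi..pi} h"
    and h_cont: "continuous (at 0 within {-pi..pi}) h"
    and h_lower: "\<exists>c>0. \<forall>x\<in>{-pi..pi}. h x \<ge> c"
    and g_def: "\<forall>x\<in>{-pi..pi}. g x = h x * (\<Prod>j\<in>{1..r}. rpow0 \<bar>x - lam j\<bar> (alpha j))"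
    and eps: "\<epsilon> > 0"
  shows "\<exists>t. trig_poly t \<and> (\<forall>x\<in>{-pi..pi}. 0 \<le> t x \<and> t x \<le> g x) \<and> t 0 \<ge> g 0 - \<epsilon>"
proof -
  define R where "R x = (\<Prod>j\<in>{1..r}. rpow0 \<bar>x - lam j\<bar> (alpha j))" for x
  obtain c where c: "0 < c" "\<forall>x\<in>{-pi..pi}. c \<le> h x"
    using h_lower by blast
  have R_nonneg: "0 \<le> R x" for x
    unfolding R_def by (intro prod_nonneg) (simp add: rpow0_nonneg)
  have g_eq: "g x = h x * R x" if "x \<in> {-pi..pi}" for x
    using g_def that by (simp add: R_def)
  show ?thesis
  proof (cases "g 0 \<le> \<epsilon>")
    case True
    have "0 \<le> g x" if "x \<in> {-pi..pi}" for x
      using g_eq[OF that] h_nonneg that R_nonneg by simp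
    with True show ?thesis
      using trig_poly_const[of 0] by (intro exI[of _ "\<lambda>x. 0"]) auto
  next
    case False
    then have "R 0 \<noteq> 0"
      using g_eq[of 0] eps by auto
    then have "has_trig_bump R"
      unfolding R_def using lam_range alpha_nonneg
      by (intro has_trig_bump_prod has_trig_bump_rpow0_abs_diff) auto
    then have "has_trig_bump (\<lambda>x. h x * R x)"
      by (rule has_trig_bump_mono[OF _ \<open>0 < c\<close>]) (use c R_nonneg in \<open>auto intro: mult_right_mono\<close>)
    moreover have "continuous (at 0 within {-pi..pi}) (\<lambda>x. h x * R x)"
      unfolding R_def using h_cont alpha_nonneg
      by (intro continuous_mult continuous_prod continuous_at_imp_continuous_at_within[OF isCont_rpow0_abs_diff]) auto
    ultimately obtain t where "trig_poly t" "\<forall>x\<in>{-pi..pi}. 0 \<le> t x \<and> t x \<le> h x * R x" "t 0 = g 0 - \<epsilon>"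
      using trig_poly_minorant_peaked_at_0[of "\<lambda>x. h x * R x" "g 0 - \<epsilon>"] False eps g_eq[of 0] by auto
    then show ?thesis
      using g_eq by (intro exI[of _ t]) auto
  qed
qed

end
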